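(* Let $m\ge 0$ and $n\ge1$. Then $\mathsf{Perm}_n(m)=\bigsqcup_{\sigma\in\Sigma(m)}\mathcal R^{\mathsf O}_n(\sigma)$ and $\mathsf{Even}_n(m)=\mathcal R^{\mathsf O}_n(\tau)=\mathcal R^{\mathsf{Sp}}_n(\pi)$, where $\tau=s_2s_4s_6\cdots s_{2m}\in I_\mathbb{Z}$ and $\pi\in I^{\mathsf{fpf}}_\mathbb{Z}$ is the involution with $\pi(i)=1_{\mathsf{fpf}}(i)$ for all $i\notin[2m]$ which maps $i\mapsto i+2$ if $i\in\{1,2m-2\}$, $i\mapsto i-2$ if $i\in\{3,2m\}$, $i\mapsto i+3$ if $i$ is even with $1<i<2m-2$, and $i\mapsto i-3$ if $i$ is odd with $3<i<2m$. Moreover, the abstract $\mathfrak q_n$-crystal structures on $\mathcal R^{\mathsf O}_n(\tau)$ and $\mathcal R^{\mathsf{Sp}}_n(\pi)$ coincide.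
   Context: $S_\mathbb{Z}$: finitely supported permutations of $\mathbb{Z}$, $s_i=(i,i+1)$, $I_\mathbb{Z}$ the involutions, $1_{\mathsf{fpf}}:i\mapsto i-(-1)^i$, $I^{\mathsf{fpf}}_\mathbb{Z}$ its conjugacy class. $\pi\rtimes s_i=s_i\pi s_i$ if $\pi s_i\ne s_i\pi$ and $\pi s_i$ otherwise; $i_1\cdots i_l$ is an involution word for $\pi\in I_\mathbb{Z}$ if with $z_0=1$, $z_j=z_{j-1}\rtimes s_{i_j}$, no $i_j$ is a descent ($z(i)>z(i+1)$) of $z_{j-1}$ and $z_l=\pi$. An fpf-involution word for $\pi\in I^{\mathsf{fpf}}_\mathbb{Z}$ is a minimal-length $i_1\cdots i_l$ with $\pi=s_{i_l}\cdots s_{i_1}1_{\mathsf{fpf}}s_{i_1}\cdots s_{i_l}$. $\mathcal R^{\mathsf O}_n(\sigma)$ (resp. $\mathcal R^{\mathsf{Sp}}_n(\pi)$) is the set of $n$-tuples $(w^1,\dots,w^n)$ of strictly increasing, possibly empty words whose concatenation is an involution word for $\sigma$ (resp. fpf-involution word for $\pi$). Crystal structures: $\mathrm{wt}(w)=(\ell(w^1),\dots,\ell(w^n))$; for increasing $a,b$, $\mathsf{pair}(a,b)$ pairs letters $b_j$ of $b$, taken from largest to smallest, with the smallest unpaired $a_i>b_j$ of $a$ when one exists; $f_i(w)$ ($i\in[n-1]$) is $0$ if all letters of $w^i$ are paired in $\mathsf{pair}(w^i,w^{i+1})$, else removes the largest unpaired $x$ from $w^i$ and adds to $w^{i+1}$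 the smallest $y\ge x$ not in $w^{i+1}$; $e_i(w)$ is $0$ if all letters of $w^{i+1}$ are paired, else removes the smallest unpaired $y$ of $w^{i+1}$ and adds to $w^i$ the largest $x\le y$ not in $w^i$. On $\mathcal R^{\mathsf O}_n(\sigma)$: $f_{\bar1}(w)$ moves the first letter $x$ of $w^1$ to the front of $w^2$ if $w^1\ne\emptyset$ and $x$ is less than every letter of $w^2$, else $0$; $e_{\bar1}(w)$ moves the first letter $x$ of $w^2$ to $w^1$ if $w^2\ne\emptyset$ and $x$ is less than every letter of $w^1$, else $0$. On $\mathcal R^{\mathsf{Sp}}_n(\pi)$: $f_{\bar1}(w)=0$ if $w^1=\emptyset$ or $\min w^2\le\min w^1$; else with $x=\min w^1$: if $x+1\notin w^1$ move $x$ to $w^2$, else remove $x+1$ from $w^1$ and add $x-1$ to the start of $w^2$; $e_{\bar1}(w)=0$ if $w^2=\emptyset$ or $\min w^1\le\min w^2$; else with $x=\min w^2$: if $x$ is even move $x$ to $w^1$, else remove $x$ from $w^2$ and add $x+2$ to $w^1$ (empty words have minimum $+\infty$). $\mathsf{Perm}(m)$ is the set of words that are permutations of $1,2,\dots,m$ (each appearing once), and $\mathsf{Perm}_n(m)$ the set of $n$-tuples of strictly increasing possibly empty words whose concatenation lies in $\mathsf{Perm}(m)$. $\mathsf{Even}(m)$ is the set of permutations of $2,4,\dots,2m$ and $\mathsf{Even}_n(m)$ the analogous set of $n$-fold increasing factorizations. $\Sigma(m)$ is the set of $\sigma\in I_\mathbb{Z}$ of the form $\sigma=(1,m)$ or $\sigma=(1,i_1)(i_1-1,i_2)(i_2-1,i_3)\cdots(i_k-1,m)$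 for some $1<i_1-1<i_1<i_2-1<i_2<\dots<i_k-1<i_k<m$. *)

theory Defs
  imports Main
begin

text \<open>Permutations of Z are represented as functions int => int.
  Products are compositions: (p q)(x) = p (q x).\<close>

definition fin_perm :: "(int \<Rightarrow> int) \<Rightarrow> bool" where
  "fin_perm w \<longleftrightarrow> bij w \<and> finite {i. w i \<noteq> i}"

definition transp :: "int \<Rightarrow> int \<Rightarrow> int \<Rightarrow> int" where
  "transp a b = (\<lambda>x. if x = a then b else if x = b then a else x)"

definition s :: "int \<Rightarrow> int \<Rightarrow> int" where
  "s i = transp i (i + 1)"

definition one_fpf :: "int \<Rightarrow> int" where
  "one_fpf i = (if even i then i - 1 else i + 1)"

definition invols :: "(int \<Rightarrow> int) set" where
  "invols = {z. fin_perm z \<and> z \<circ> z = id}"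

definition fpf_invols :: "(int \<Rightarrow> int) set" where
  "fpf_invols = {p. \<exists>w. fin_perm w \<and> p = w \<circ> one_fpf \<circ> inv w}"

definition rtimes :: "(int \<Rightarrow> int) \<Rightarrow> int \<Rightarrow> (int \<Rightarrow> int)" where
  "rtimes z i = (if z \<circ> s i \<noteq> s i \<circ> z then s i \<circ> z \<circ> s i else z \<circ> s i)"

fun iw_run :: "(int \<Rightarrow> int) \<Rightarrow> int list \<Rightarrow> (int \<Rightarrow> int) option" where
  "iw_run z [] = Some z"
| "iw_run z (i # is) = (if z i > z (i + 1) then None else iw_run (rtimes z i) is)"

definition is_inv_word :: "(int \<Rightarrow> int) \<Rightarrow> int list \<Rightarrow> bool" where
  "is_inv_word p a \<longleftrightarrow> iw_run id a = Some p"

definition fpf_act :: "int list \<Rightarrow> (int \<Rightarrow> int)" where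
  "fpf_act a = foldl (\<lambda>z i. s i \<circ> z \<circ> s i) one_fpf a"

definition is_fpf_word :: "(int \<Rightarrow> int) \<Rightarrow> int list \<Rightarrow> bool" where
  "is_fpf_word p a \<longleftrightarrow> fpf_act a = p \<and> (\<forall>b. fpf_act b = p \<longrightarrow> length a \<le> length b)"

definition incr_fact :: "nat \<Rightarrow> int list list \<Rightarrow> bool" where
  "incr_fact n ws \<longleftrightarrow> length ws = n \<and> (\<forall>w \<in> set ws. sorted_wrt (<) w)"

definition RO :: "nat \<Rightarrow> (int \<Rightarrow> int) \<Rightarrow> int list list set" where
  "RO n \<sigma> = {ws. incr_fact n ws \<and> is_inv_word \<sigma> (concat ws)}"

definition RSp :: "nat \<Rightarrow> (int \<Rightarrow> int) \<Rightarrow> int list list set" where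
  "RSp n \<pi> = {ws. incr_fact n ws \<and> is_fpf_word \<pi> (concat ws)}"

definition PermN :: "nat \<Rightarrow> nat \<Rightarrow> int list list set" where
  "PermN n m = {ws. incr_fact n ws \<and> distinct (concat ws) \<and> set (concat ws) = {1..int m}}"

definition EvenN :: "nat \<Rightarrow> nat \<Rightarrow> int list list set" where
  "EvenN n m = {ws. incr_fact n ws \<and> distinct (concat ws)
                    \<and> set (concat ws) = (\<lambda>k. 2 * k) ` {1..int m}}"

text \<open>Sigma(M) exactly as in the paper, with endpoint M:
  (1,M), or (1,i_1)(i_1-1,i_2)...(i_k-1,M) with
  1 < i_1-1 < i_1 < i_2-1 < i_2 < ... < i_k-1 < i_k < M, k >= 1.\<close>
definition chain_perm :: "int list \<Rightarrow> int \<Rightarrow> (int \<Rightarrow> int)" where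
  "chain_perm is M = foldr (\<lambda>(a, b) f. transp a b \<circ> f)
                           (zip (1 # map (\<lambda>i. i - 1) is) (is @ [M])) id"

definition Sigma_set :: "int \<Rightarrow> (int \<Rightarrow> int) set" where
  "Sigma_set M = {transp 1 M} \<union>
     {chain_perm is M | is. is \<noteq> [] \<and>
        sorted_wrt (<) (1 # concat (map (\<lambda>i. [i - 1, i]) is) @ [M])}"

definition tau :: "nat \<Rightarrow> int \<Rightarrow> int" where
  "tau m = foldr (\<lambda>k f. s (2 * k) \<circ> f) [1..int m] id"

text \<open>The description of pi from the paper, with parameter M in the role of m.\<close>
definition pi_cond :: "int \<Rightarrow> (int \<Rightarrow> int) \<Rightarrow> bool" where
  "pi_cond M p \<longleftrightarrow>
     (\<forall>i. i \<notin> {1..2 * M} \<longrightarrow> p i = one_fpf i)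
   \<and> (\<forall>i \<in> {1..2 * M}. i \<in> {1, 2 * M - 2} \<longrightarrow> p i = i + 2)
   \<and> (\<forall>i \<in> {1..2 * M}. i \<in> {3, 2 * M} \<longrightarrow> p i = i - 2)
   \<and> (\<forall>i. even i \<and> 1 < i \<and> i < 2 * M - 2 \<longrightarrow> p i = i + 3)
   \<and> (\<forall>i. odd i \<and> 3 < i \<and> i < 2 * M \<longrightarrow> p i = i - 3)"

section \<open>The queer operators f_{bar 1}, e_{bar 1} (None encodes 0)\<close>

definition fbar1_O :: "int list list \<Rightarrow> int list list option" where
  "fbar1_O ws = (let w1 = ws ! 0; w2 = ws ! 1 in
     if w1 \<noteq> [] \<and> (\<forall>y \<in> set w2. hd w1 < y)
     then Some (ws[0 := tl w1, 1 := hd w1 # w2]) else None)"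

definition ebar1_O :: "int list list \<Rightarrow> int list list option" where
  "ebar1_O ws = (let w1 = ws ! 0; w2 = ws ! 1 in
     if w2 \<noteq> [] \<and> (\<forall>y \<in> set w1. hd w2 < y)
     then Some (ws[0 := hd w2 # w1, 1 := tl w2]) else None)"

text \<open>For strictly increasing words the minimum is the head; empty words have
  minimum +infinity.\<close>
definition fbar1_Sp :: "int list list \<Rightarrow> int list list option" where
  "fbar1_Sp ws = (let w1 = ws ! 0; w2 = ws ! 1 in
     if w1 = [] \<or> (w2 \<noteq> [] \<and> hd w2 \<le> hd w1) then None
     else (let x = hd w1 in
       if x + 1 \<notin> set w1 then Some (ws[0 := tl w1, 1 := x # w2])
       else Some (ws[0 := removeAll (x + 1) w1, 1 := (x - 1) # w2])))"

definition ebar1_Sp :: "int list list \<Rightarrow> int list list option" where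
  "ebar1_Sp ws = (let w1 = ws ! 0; w2 = ws ! 1 in
     if w2 = [] \<or> (w1 \<noteq> [] \<and> hd w1 \<le> hd w2) then None
     else (let x = hd w2 in
       if even x then Some (ws[0 := insort x w1, 1 := tl w2])
       else Some (ws[0 := insort (x + 2) w1, 1 := tl w2])))"

end

theory Submission
  imports Defs
begin

(* Every element of Sigma(c) is a chain (a, j_1)(j_1 - 1, j_2) ... (j_k - 1, c) of crossing
   transpositions, here with a = 1. Reading an involution word for a chain backwards, its last
   letter i must be a descent, and undoing it splits the chain into a chain on [a, i] and a chain on
   [i + 1, c]. These two factors live on opposite sides of i, so the involution words of their
   product are exactly the shuffles of words of the factors (the letter i itself would move a point
   across i). By induction on the length, the involution words of chains on [a, c] are therefore
   exactly the arrangements of a, ..., c - 1. The same splitting shows that the involution words of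
   tau = s_2 s_4 ... s_2m are the arrangements of 2, 4, ..., 2m.

   For pi = tau 1_fpf tau, a word of distinct even letters conjugates 1_fpf exactly to pi, while a
   word avoiding an even letter j never moves a point x <= j above j, whereas pi j > j. Hence every
   fpf-involution word for pi contains 2, 4, ..., 2m, and minimality leaves exactly these letters.
   Since all letters are even, the case distinctions in the symplectic operators f_bar1 and e_bar1
   always take the branch that agrees with the orthogonal ones. *)

section \<open>Demazure conjugation\<close>

lemma s_apply: "s i x = (if x = i then i + 1 else if x = i + 1 then i else x)"
  by (simp add: s_def transp_def)

lemma transp_apply: "transp a b x = (if x = a then b else if x = b then a else x)"
  by (simp add: transp_def)

lemma s_s [simp]: "s i (s i x) = x"
  by (simp add: s_apply)

lemma transp_self: "transp a a = id"
  by (auto simp: fun_eq_iff transp_apply)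

lemma s_conj_transp: "s i \<circ> transp a b \<circ> s i = transp (s i a) (s i b)"
  by (auto simp: fun_eq_iff transp_apply s_apply)

lemma s_conj_comp: "s i \<circ> (f \<circ> g) \<circ> s i = (s i \<circ> f \<circ> s i) \<circ> (s i \<circ> g \<circ> s i)"
  by (simp add: fun_eq_iff)

definition involutive :: "(int \<Rightarrow> int) \<Rightarrow> bool" where
  "involutive z \<longleftrightarrow> (\<forall>x. z (z x) = x)"

lemma involutive_id: "involutive id"
  by (simp add: involutive_def)

lemma involutive_inj: "involutive z \<Longrightarrow> z x = z y \<Longrightarrow> x = y"
  unfolding involutive_def by metis

lemma involutive_comp_self: "involutive z \<Longrightarrow> z \<circ> z = id"
  by (simp add: involutive_def fun_eq_iff)

lemma rtimes_commuting: "z \<circ> s i = s i \<circ> z \<Longrightarrow> rtimes z i = z \<circ> s i"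
  unfolding rtimes_def by auto

lemma rtimes_noncommuting: "z \<circ> s i \<noteq> s i \<circ> z \<Longrightarrow> rtimes z i = s i \<circ> z \<circ> s i"
  unfolding rtimes_def by auto

lemma noncommuting_at: "z (s i i) \<noteq> s i (z i) \<Longrightarrow> z \<circ> s i \<noteq> s i \<circ> z"
  by (metis comp_apply)

lemma involutive_rtimes: "involutive z \<Longrightarrow> involutive (rtimes z i)"
  unfolding rtimes_def involutive_def by (auto simp: fun_eq_iff)

lemma involutive_commute_s:
  assumes "involutive z" "z i = i" "z (i + 1) = i + 1"
  shows "z \<circ> s i = s i \<circ> z"
proof
  fix x
  have "x \<noteq> i \<Longrightarrow> x \<noteq> i + 1 \<Longrightarrow> z x \<noteq> i \<and> z x \<noteq> i + 1"
    using assms involutive_inj by metis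
  then show "(z \<circ> s i) x = (s i \<circ> z) x"
    using assms by (auto simp: s_apply)
qed

lemma rtimes_descent:
  assumes "involutive z" "\<not> z i > z (i + 1)"
  shows "rtimes z i i > rtimes z i (i + 1)"
proof -
  have lt: "z i < z (i + 1)"
    using assms involutive_inj[of z i "i + 1"] by fastforce
  show ?thesis
  proof (cases "z \<circ> s i = s i \<circ> z")
    case True
    show ?thesis using lt unfolding rtimes_commuting[OF True] by (simp add: s_apply)
  next
    case False
    then have "\<not> (z i = i \<and> z (i + 1) = i + 1)"
      using involutive_commute_s assms(1) by blast
    then show ?thesis using lt False by (auto simp: rtimes_noncommuting s_apply)
  qed
qed

lemma rtimes_inj: assumes "rtimes z1 i = rtimes z2 i" shows "z1 = z2"
proof -
  have s_cancel: "f \<circ> s i = g \<circ> s i \<Longrightarrow> f = g" for f g :: "int \<Rightarrow> int"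
    by (metis (no_types, lifting) comp_apply ext s_s)
  have conj_cancel: "s i \<circ> f \<circ> s i = s i \<circ> g \<circ> s i \<Longrightarrow> f = g" for f g :: "int \<Rightarrow> int"
    by (metis (no_types, lifting) comp_apply ext s_s)
  have mixed: False if "z \<circ> s i = s i \<circ> z" "z' \<circ> s i \<noteq> s i \<circ> z'" "z \<circ> s i = s i \<circ> z' \<circ> s i"
    for z z' :: "int \<Rightarrow> int"
  proof -
    have "z' = s i \<circ> z" using that(3) by (metis comp_apply ext s_s)
    then show False using that(1,2) by (simp add: fun_eq_iff)
  qed
  show ?thesis
  proof (cases "z1 \<circ> s i = s i \<circ> z1"; cases "z2 \<circ> s i = s i \<circ> z2")
    assume "z1 \<circ> s i = s i \<circ> z1" "z2 \<circ> s i = s i \<circ> z2"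
    then show ?thesis using assms s_cancel by (simp add: rtimes_commuting)
  next
    assume "z1 \<circ> s i = s i \<circ> z1" "z2 \<circ> s i \<noteq> s i \<circ> z2"
    then show ?thesis using assms mixed by (metis rtimes_commuting rtimes_noncommuting)
  next
    assume "z1 \<circ> s i \<noteq> s i \<circ> z1" "z2 \<circ> s i = s i \<circ> z2"
    then show ?thesis using assms mixed by (metis rtimes_commuting rtimes_noncommuting)
  next
    assume "z1 \<circ> s i \<noteq> s i \<circ> z1" "z2 \<circ> s i \<noteq> s i \<circ> z2"
    then show ?thesis using assms conj_cancel by (simp add: rtimes_noncommuting)
  qed
qed

lemma rtimes_straddling:
  assumes "z i \<le> i" "i + 1 \<le> z (i + 1)" "z i < i \<or> i + 1 < z (i + 1)"
  shows "rtimes z i = s i \<circ> z \<circ> s i"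
proof -
  have "z (s i i) \<noteq> s i (z i)" using assms by (auto simp: s_apply)
  then show ?thesis by (intro rtimes_noncommuting noncommuting_at)
qed

section \<open>Involution words and splitting\<close>

lemma iw_run_snoc:
  "iw_run z (p @ [i]) = (case iw_run z p of None \<Rightarrow> None
     | Some y \<Rightarrow> if y i > y (i + 1) then None else Some (rtimes y i))"
  by (induction p arbitrary: z) auto

lemma involutive_iw_run: "iw_run z p = Some y \<Longrightarrow> involutive z \<Longrightarrow> involutive y"
  by (induction p arbitrary: z) (auto split: if_splits intro: involutive_rtimes)

definition crosses :: "int \<Rightarrow> (int \<Rightarrow> int) \<Rightarrow> bool" where
  "crosses i z \<longleftrightarrow> (\<exists>x \<le> i. i < z x)"

lemma crosses_of_descent:
  assumes "involutive z" "z i > z (i + 1)"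
  shows "crosses i z"
proof (cases "z i > i")
  case True
  then show ?thesis unfolding crosses_def by auto
next
  case False
  then have "z (i + 1) \<le> i" using assms by auto
  moreover have "z (z (i + 1)) = i + 1" using assms unfolding involutive_def by auto
  ultimately show ?thesis unfolding crosses_def by (intro exI[of _ "z (i + 1)"]) auto
qed

lemma crosses_rtimes:
  assumes "involutive z" "\<not> z j > z (j + 1)" "crosses i z \<or> j = i"
  shows "crosses i (rtimes z j)"
proof (cases "j = i")
  case True
  then show ?thesis
    using assms crosses_of_descent rtimes_descent involutive_rtimes by blast
next
  case False
  then obtain x where x: "x \<le> i" "z x > i" using assms unfolding crosses_def by auto
  have sx: "s j x \<le> i" "s j (z x) > i" using x False by (auto simp: s_apply)
  show ?thesis
  proof (cases "z \<circ> s j = s j \<circ> z")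
    case True
    show ?thesis
      using sx x unfolding rtimes_commuting[OF True] crosses_def by (intro exI[of _ "s j x"]) auto
  next
    case False
    show ?thesis
      using sx unfolding rtimes_noncommuting[OF False] crosses_def by (intro exI[of _ "s j x"]) auto
  qed
qed

lemma crosses_iw_run:
  "iw_run z p = Some y \<Longrightarrow> involutive z \<Longrightarrow> crosses i z \<or> i \<in> set p \<Longrightarrow> crosses i y"
proof (induction p arbitrary: z)
  case (Cons j p)
  have "\<not> z j > z (j + 1)" and run: "iw_run (rtimes z j) p = Some y"
    using Cons.prems by (auto split: if_splits)
  then have "crosses i (rtimes z j) \<or> i \<in> set p"
    using crosses_rtimes[OF Cons.prems(2)] Cons.prems(3) by auto
  then show ?case using Cons.IH[OF run involutive_rtimes[OF Cons.prems(2)]] by auto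
qed auto

lemma iw_run_id_eq_id: "iw_run id p = Some id \<longleftrightarrow> p = []"
proof
  assume "iw_run id p = Some id"
  then have "\<not> crosses i id" if "i \<in> set p" for i
    by (auto simp: crosses_def)
  then show "p = []"
    using crosses_iw_run[OF \<open>iw_run id p = Some id\<close> involutive_id]
    by (metis list.set_intros(1) neq_Nil_conv)
qed simp

definition fixes_above :: "int \<Rightarrow> (int \<Rightarrow> int) \<Rightarrow> bool" where
  "fixes_above i z \<longleftrightarrow> (\<forall>x > i. z x = x)"

definition fixes_upto :: "int \<Rightarrow> (int \<Rightarrow> int) \<Rightarrow> bool" where
  "fixes_upto i z \<longleftrightarrow> (\<forall>x \<le> i. z x = x)"

lemma fixes_above_le: "involutive z \<Longrightarrow> fixes_above i z \<Longrightarrow> x \<le> i \<Longrightarrow> z x \<le> i"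
  unfolding involutive_def fixes_above_def by (metis not_le)

lemma fixes_upto_gt: "involutive z \<Longrightarrow> fixes_upto i z \<Longrightarrow> x > i \<Longrightarrow> z x > i"
  unfolding involutive_def fixes_upto_def by (metis not_le)

lemma fixes_above_fixes_upto_commute:
  assumes "fixes_above i f" "fixes_upto i g" "involutive f" "involutive g"
  shows "f \<circ> g = g \<circ> f"
proof
  fix x
  show "(f \<circ> g) x = (g \<circ> f) x"
    using assms fixes_above_le[of f i x] fixes_upto_gt[of g i x]
    unfolding fixes_above_def fixes_upto_def by (cases "x \<le> i") auto
qed

lemma fixes_above_commute_s:
  assumes "fixes_above i f" "involutive f" "i < j"
  shows "f \<circ> s j = s j \<circ> f"
proof
  fix x
  show "(f \<circ> s j) x = (s j \<circ> f) x"
    using assms fixes_above_le[of f i x] unfolding fixes_above_def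
    by (cases "x \<le> i") (auto simp: s_apply)
qed

lemma fixes_upto_commute_s:
  assumes "fixes_upto i g" "involutive g" "j < i"
  shows "g \<circ> s j = s j \<circ> g"
proof
  fix x
  show "(g \<circ> s j) x = (s j \<circ> g) x"
    using assms fixes_upto_gt[of g i x] unfolding fixes_upto_def
    by (cases "x \<le> i") (auto simp: s_apply)
qed

lemma rtimes_comp_commuting:
  assumes "z2 \<circ> s j = s j \<circ> z2" "involutive z2"
  shows "rtimes (z1 \<circ> z2) j = rtimes z1 j \<circ> z2"
proof -
  have "(z1 \<circ> z2) \<circ> s j = s j \<circ> (z1 \<circ> z2) \<longleftrightarrow> z1 \<circ> s j = s j \<circ> z1"
    using assms by (metis (no_types, lifting) comp_assoc comp_id involutive_comp_self)
  then show ?thesis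
    using assms(1) unfolding rtimes_def by (simp add: comp_assoc)
qed

lemma fixes_above_rtimes: "fixes_above i z \<Longrightarrow> j < i \<Longrightarrow> fixes_above i (rtimes z j)"
  unfolding fixes_above_def rtimes_def by (auto simp: s_apply)

lemma fixes_upto_rtimes: "fixes_upto i z \<Longrightarrow> i < j \<Longrightarrow> fixes_upto i (rtimes z j)"
  unfolding fixes_upto_def rtimes_def by (auto simp: s_apply)

lemma fixes_above_iw_run:
  "iw_run z p = Some y \<Longrightarrow> \<forall>j \<in> set p. j < i \<Longrightarrow> fixes_above i z \<Longrightarrow> fixes_above i y"
  by (induction p arbitrary: z) (auto split: if_splits intro: fixes_above_rtimes)

lemma fixes_upto_iw_run:
  "iw_run z p = Some y \<Longrightarrow> \<forall>j \<in> set p. i < j \<Longrightarrow> fixes_upto i z \<Longrightarrow> fixes_upto i y"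
  by (induction p arbitrary: z) (auto split: if_splits intro: fixes_upto_rtimes)

lemma iw_run_comp_split:
  assumes "i \<notin> set p" "involutive z1" "involutive z2" "fixes_above i z1" "fixes_upto i z2"
  shows "iw_run (z1 \<circ> z2) p =
    (case (iw_run z1 [j\<leftarrow>p. j < i], iw_run z2 [j\<leftarrow>p. i < j]) of
       (Some y1, Some y2) \<Rightarrow> Some (y1 \<circ> y2) | _ \<Rightarrow> None)"
  using assms
proof (induction p arbitrary: z1 z2)
  case Nil
  then show ?case by (simp add: comp_def)
next
  case (Cons j p)
  show ?case
  proof (cases "j < i")
    case True
    have "(z1 \<circ> z2) j = z1 j" "(z1 \<circ> z2) (j + 1) = z1 (j + 1)"
      using Cons.prems(5) True unfolding fixes_upto_def by auto
    moreover have "rtimes (z1 \<circ> z2) j = rtimes z1 j \<circ> z2"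
      using rtimes_comp_commuting fixes_upto_commute_s Cons.prems True by blast
    moreover note Cons.IH[of "rtimes z1 j" z2] Cons.prems True
    ultimately show ?thesis
      by (simp del: comp_apply add: involutive_rtimes fixes_above_rtimes)
  next
    case False
    then have ij: "i < j" using Cons.prems(1) by auto
    have "(z1 \<circ> z2) j = z2 j" "(z1 \<circ> z2) (j + 1) = z2 (j + 1)"
      using Cons.prems(4) fixes_upto_gt[OF Cons.prems(3,5)] ij unfolding fixes_above_def by auto
    moreover have "rtimes (z1 \<circ> z2) j = z1 \<circ> rtimes z2 j"
    proof -
      have "rtimes (z2 \<circ> z1) j = rtimes z2 j \<circ> z1"
        using rtimes_comp_commuting fixes_above_commute_s Cons.prems ij by blast
      then show ?thesis
        using fixes_above_fixes_upto_commute[OF Cons.prems(4) _ Cons.prems(2)]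
          Cons.prems(3,5) fixes_upto_rtimes[OF Cons.prems(5) ij] involutive_rtimes
        by metis
    qed
    moreover note Cons.IH[of z1 "rtimes z2 j"] Cons.prems ij
    ultimately show ?thesis
      by (simp del: comp_apply add: involutive_rtimes fixes_upto_rtimes split: option.splits)
  qed
qed

lemma fixes_above_fixes_upto_unique:
  assumes "fixes_above i y1" "fixes_upto i y2" "fixes_above i z1" "fixes_upto i z2"
    and "involutive y2" "involutive z2" "y1 \<circ> y2 = z1 \<circ> z2"
  shows "y1 = z1" "y2 = z2"
proof -
  have eq: "y1 (y2 x) = z1 (z2 x)" for x
    using assms(7) by (metis comp_apply)
  show "y1 = z1"
  proof
    fix x
    show "y1 x = z1 x"
      using eq[of x] assms(1-4) unfolding fixes_above_def fixes_upto_def by (cases "x \<le> i") auto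
  qed
  show "y2 = z2"
  proof
    fix x
    show "y2 x = z2 x"
      using eq[of x] fixes_upto_gt[OF assms(5,2), of x] fixes_upto_gt[OF assms(6,4), of x]
        assms(1-4) unfolding fixes_above_def fixes_upto_def by (cases "x \<le> i") auto
  qed
qed

lemma iw_run_id_comp_iff:
  assumes "involutive y1" "involutive y2" "fixes_above i y1" "fixes_upto i y2"
  shows "iw_run id w = Some (y1 \<circ> y2) \<longleftrightarrow>
    i \<notin> set w \<and> iw_run id [j\<leftarrow>w. j < i] = Some y1 \<and> iw_run id [j\<leftarrow>w. i < j] = Some y2"
proof -
  have split: "iw_run id w =
    (case (iw_run id [j\<leftarrow>w. j < i], iw_run id [j\<leftarrow>w. i < j]) of
       (Some y1, Some y2) \<Rightarrow> Some (y1 \<circ> y2) | _ \<Rightarrow> None)" if "i \<notin> set w"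
    using iw_run_comp_split[OF that involutive_id involutive_id]
    by (simp add: fixes_above_def fixes_upto_def)
  show ?thesis
  proof
    assume run: "iw_run id w = Some (y1 \<circ> y2)"
    have "\<not> crosses i (y1 \<circ> y2)"
      using assms(3,4) fixes_above_le[OF assms(1,3)] unfolding crosses_def fixes_upto_def
      by (metis comp_apply not_le)
    then have i: "i \<notin> set w"
      using crosses_iw_run[OF run involutive_id] by blast
    then obtain z1 z2 where z1: "iw_run id [j\<leftarrow>w. j < i] = Some z1"
      and z2: "iw_run id [j\<leftarrow>w. i < j] = Some z2" and "z1 \<circ> z2 = y1 \<circ> y2"
      using split run by (auto split: option.splits)
    moreover have "fixes_above i z1"
      using fixes_above_iw_run[OF z1, of i] by (simp add: fixes_above_def)
    moreover have "fixes_upto i z2"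
      using fixes_upto_iw_run[OF z2, of i] by (simp add: fixes_upto_def)
    moreover have "involutive z2"
      using involutive_iw_run[OF z2 involutive_id] .
    ultimately show
      "i \<notin> set w \<and> iw_run id [j\<leftarrow>w. j < i] = Some y1 \<and> iw_run id [j\<leftarrow>w. i < j] = Some y2"
      using fixes_above_fixes_upto_unique[of i z1 z2 y1 y2] assms i by auto
  next
    assume "i \<notin> set w \<and> iw_run id [j\<leftarrow>w. j < i] = Some y1 \<and> iw_run id [j\<leftarrow>w. i < j] = Some y2"
    then show "iw_run id w = Some (y1 \<circ> y2)"
      using split by simp
  qed
qed

(* distinct_filter is dropped because, as a conditional rewrite rule, it loops against the
   induction hypothesis. *)
lemma distinct_iff_distinct_filters:
  "distinct w \<longleftrightarrow> distinct (filter P w) \<and> distinct (filter (\<lambda>x. \<not> P x) w)"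
  by (induction w) (auto simp del: distinct_filter)

lemma filter_not_less_eq:
  fixes i :: int
  assumes "i \<notin> set w"
  shows "[j\<leftarrow>w. \<not> j < i] = [j\<leftarrow>w. i < j]"
  using assms by (intro filter_cong) (auto simp: not_less_iff_gr_or_eq)

lemma distinct_filter_split:
  fixes i :: int
  assumes "i \<notin> set w"
  shows "distinct w \<longleftrightarrow> distinct [j\<leftarrow>w. j < i] \<and> distinct [j\<leftarrow>w. i < j]"
  using distinct_iff_distinct_filters[of w "\<lambda>j. j < i"] filter_not_less_eq[OF assms]
  by (simp del: distinct_filter)

lemma set_filter_split:
  fixes i :: int
  assumes "i \<notin> set w"
  shows "set w = set [j\<leftarrow>w. j < i] \<union> set [j\<leftarrow>w. i < j]"
proof -
  have "set w = set [j\<leftarrow>w. j < i] \<union> set [j\<leftarrow>w. \<not> j < i]"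
    by auto
  then show ?thesis
    unfolding filter_not_less_eq[OF assms] .
qed

section \<open>Chain involutions\<close>

(* chain_inv a [j_1, ..., j_k] c is (a, j_1)(j_1 - 1, j_2) ... (j_k - 1, c), and chain_seq a js c
   says a < j_1 - 1 < j_1 < ... < j_k - 1 < j_k < c; for a = 1 these are the elements of
   Sigma(c). *)
fun chain_seq :: "int \<Rightarrow> int list \<Rightarrow> int \<Rightarrow> bool" where
  "chain_seq a [] c \<longleftrightarrow> a < c"
| "chain_seq a (j # js) c \<longleftrightarrow> a + 2 \<le> j \<and> chain_seq j js c"

fun chain_inv :: "int \<Rightarrow> int list \<Rightarrow> int \<Rightarrow> int \<Rightarrow> int" where
  "chain_inv a [] c = transp a c"
| "chain_inv a (j # js) c = transp a j \<circ> chain_inv (j - 1) js c"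

lemma chain_seq_less: "chain_seq a js c \<Longrightarrow> a < c"
  by (induction js arbitrary: a) fastforce+

lemma chain_seq_lower_start: "chain_seq a js c \<Longrightarrow> a' \<le> a \<Longrightarrow> chain_seq a' js c"
  by (cases js) auto

lemma chain_seq_raise_end: "chain_seq a js c \<Longrightarrow> c \<le> c' \<Longrightarrow> chain_seq a js c'"
  by (induction js arbitrary: a) auto

lemma chain_seq_tail: "chain_seq a (j # js) c \<Longrightarrow> chain_seq (j - 1) js c"
  by (auto intro: chain_seq_lower_start)

lemma chain_seq_append_Cons:
  "chain_seq a (js1 @ k # js2) c \<longleftrightarrow> chain_seq a js1 (k - 1) \<and> chain_seq k js2 c"
  by (induction js1 arbitrary: a) auto

lemma chain_seq_combine: "chain_seq a js c' \<Longrightarrow> chain_seq a' js c \<Longrightarrow> a < c \<Longrightarrow> chain_seq a js c"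
  by (cases js) auto

lemma chain_inv_outside: "chain_seq a js c \<Longrightarrow> x < a \<or> c < x \<Longrightarrow> chain_inv a js c x = x"
proof (induction js arbitrary: a)
  case (Cons j r)
  have "chain_inv (j - 1) r c x = x"
    using Cons.IH[OF chain_seq_tail[OF Cons.prems(1)]] Cons.prems by auto
  then show ?case using Cons.prems chain_seq_less[of j r c] by (auto simp: transp_apply)
qed (auto simp: transp_apply)

lemma chain_inv_range:
  "chain_seq a js c \<Longrightarrow> a \<le> x \<Longrightarrow> x \<le> c \<Longrightarrow> a \<le> chain_inv a js c x \<and> chain_inv a js c x \<le> c"
proof (induction js arbitrary: a)
  case (Cons j r)
  have tail: "chain_seq (j - 1) r c" using Cons.prems chain_seq_tail by blast
  have "j - 1 \<le> chain_inv (j - 1) r c x \<and> chain_inv (j - 1) r c x \<le> c \<or> chain_inv (j - 1) r c x = x"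
    using Cons.IH[OF tail] chain_inv_outside[OF tail] Cons.prems by (cases "x < j - 1") auto
  then show ?case using Cons.prems chain_seq_less[of j r c] by (auto simp: transp_apply)
qed (auto simp: transp_apply)

lemma chain_inv_start: "chain_seq a js c \<Longrightarrow> a < chain_inv a js c a"
proof (cases js)
  case (Cons j r)
  assume "chain_seq a js c"
  then have "chain_inv (j - 1) r c a = a"
    using Cons chain_inv_outside[OF chain_seq_tail] by auto
  then show ?thesis using Cons \<open>chain_seq a js c\<close> by (simp add: transp_apply)
qed (simp add: transp_apply)

lemma chain_inv_end: "chain_seq a js c \<Longrightarrow> chain_inv a js c c < c"
proof (induction js arbitrary: a)
  case (Cons j r)
  have tail: "chain_seq (j - 1) r c" using Cons.prems chain_seq_tail by blast
  have "chain_inv (j - 1) r c c < c" "j - 1 \<le> chain_inv (j - 1) r c c"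
    using Cons.IH[OF tail] chain_inv_range[OF tail, of c] chain_seq_less[OF tail] by auto
  then show ?case using Cons.prems by (auto simp: transp_apply)
qed (simp add: transp_apply)

lemma chain_inv_pred_fixes: "chain_seq j r c \<Longrightarrow> chain_inv (j - 1) r c j = j"
proof (cases r)
  case (Cons j2 r2)
  assume "chain_seq j r c"
  then have "chain_inv (j2 - 1) r2 c j = j"
    using Cons chain_inv_outside[OF chain_seq_tail] by auto
  then show ?thesis using Cons \<open>chain_seq j r c\<close> by (simp add: transp_apply)
qed (simp add: transp_apply)

lemma chain_inv_pred_start: "chain_seq j r c \<Longrightarrow> j < chain_inv (j - 1) r c (j - 1)"
proof (cases r)
  case (Cons j2 r2)
  assume "chain_seq j r c"
  then have "chain_inv (j2 - 1) r2 c (j - 1) = j - 1"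
    using Cons chain_inv_outside[OF chain_seq_tail] by auto
  then show ?thesis using Cons \<open>chain_seq j r c\<close> by (simp add: transp_apply)
qed (simp add: transp_apply)

lemma chain_inv_involutive: "chain_seq a js c \<Longrightarrow> involutive (chain_inv a js c)"
proof (induction js arbitrary: a)
  case Nil
  then show ?case by (auto simp: involutive_def transp_apply)
next
  case (Cons j r)
  have tail: "chain_seq (j - 1) r c" using Cons.prems chain_seq_tail by blast
  have bounds: "a + 2 \<le> j" "chain_seq j r c" using Cons.prems by auto
  let ?g = "chain_inv (j - 1) r c"
  have "?g a = a" using chain_inv_outside[OF tail] bounds by auto
  moreover have "?g j = j" using chain_inv_pred_fixes bounds by auto
  moreover have "?g (?g y) = y" for y using Cons.IH[OF tail] by (simp add: involutive_def)
  ultimately show ?case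
    unfolding involutive_def by (simp add: transp_apply) metis
qed

lemma s_conj_chain_inv_disjoint:
  assumes "chain_seq a js c" "c < i \<or> i + 1 < a"
  shows "s i \<circ> chain_inv a js c \<circ> s i = chain_inv a js c"
proof
  fix x
  show "(s i \<circ> chain_inv a js c \<circ> s i) x = chain_inv a js c x"
  proof (cases "a \<le> x \<and> x \<le> c")
    case True
    then show ?thesis using chain_inv_range[OF assms(1), of x] assms(2) by (auto simp: s_apply)
  next
    case False
    then show ?thesis using chain_inv_outside[OF assms(1)] assms(2) by (auto simp: s_apply)
  qed
qed

lemma s_conj_chain_inv_start:
  assumes "chain_seq (i + 1) js c"
  shows "s i \<circ> chain_inv (i + 1) js c \<circ> s i = chain_inv i js c"
proof (cases js)
  case Nil
  then show ?thesis using assms by (simp add: s_conj_transp) (simp add: s_apply)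
next
  case (Cons j r)
  have tail: "chain_seq (j - 1) r c" using assms Cons chain_seq_tail by blast
  have "s i \<circ> chain_inv (i + 1) js c \<circ> s i
      = (s i \<circ> transp (i + 1) j \<circ> s i) \<circ> (s i \<circ> chain_inv (j - 1) r c \<circ> s i)"
    using Cons s_conj_comp by simp
  also have "\<dots> = transp i j \<circ> chain_inv (j - 1) r c"
    using s_conj_chain_inv_disjoint[OF tail, of i] assms Cons
    by (simp add: s_conj_transp) (simp add: s_apply)
  finally show ?thesis using Cons by simp
qed

lemma s_conj_chain_inv_end:
  "chain_seq a js i \<Longrightarrow> s i \<circ> chain_inv a js i \<circ> s i = chain_inv a js (i + 1)"
proof (induction js arbitrary: a)
  case Nil
  then have "s i a = a" "s i i = i + 1" by (auto simp: s_apply)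
  then show ?case by (simp only: chain_inv.simps s_conj_transp)
next
  case (Cons j r)
  have "s i a = a" "s i j = j" using Cons.prems chain_seq_less[of j r i] by (auto simp: s_apply)
  then show ?case using Cons.IH[OF chain_seq_tail[OF Cons.prems]]
    by (simp only: chain_inv.simps s_conj_comp s_conj_transp)
qed

lemma s_conj_chain_inv_join: "chain_seq a js i \<Longrightarrow> chain_seq (i + 1) ks c \<Longrightarrow>
    s i \<circ> (chain_inv a js i \<circ> chain_inv (i + 1) ks c) \<circ> s i = chain_inv a (js @ (i + 1) # ks) c"
proof (induction js arbitrary: a)
  case Nil
  then have "s i a = a" "s i i = i + 1" by (auto simp: s_apply)
  then show ?case using s_conj_chain_inv_start[OF Nil.prems(2)]
    by (simp only: append.simps chain_inv.simps s_conj_comp s_conj_transp add_diff_cancel_right')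
next
  case (Cons j r)
  have "s i a = a" "s i j = j" using Cons.prems chain_seq_less[of j r i] by (auto simp: s_apply)
  moreover have "s i \<circ> (chain_inv a (j # r) i \<circ> chain_inv (i + 1) ks c) \<circ> s i
      = (s i \<circ> transp a j \<circ> s i) \<circ> (s i \<circ> (chain_inv (j - 1) r i \<circ> chain_inv (i + 1) ks c) \<circ> s i)"
    by (simp add: fun_eq_iff)
  ultimately show ?case using Cons.IH[OF chain_seq_tail[OF Cons.prems(1)] Cons.prems(2)]
    by (simp only: append_Cons chain_inv.simps s_conj_transp)
qed

lemma chain_inv_Cons_descent_le:
  assumes "chain_seq a (j # r) c" "i \<le> j"
    and descent: "chain_inv a (j # r) c i > chain_inv a (j # r) c (i + 1)"
  shows "i = a \<and> i + 1 < j - 1 \<or> i = j - 1"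
proof -
  have tail: "chain_seq (j - 1) r c" using assms(1) chain_seq_tail by blast
  have bounds: "a + 2 \<le> j" "j < c" "chain_seq j r c" using assms(1) chain_seq_less by auto
  let ?g = "chain_inv (j - 1) r c"
  have outside: "x < j - 1 \<or> c < x \<Longrightarrow> ?g x = x" for x
    using chain_inv_outside[OF tail] by auto
  have desc: "transp a j (?g i) > transp a j (?g (i + 1))" using descent by simp
  consider "i + 1 < j - 1" | "i + 1 = j - 1" | "i = j - 1" | "i = j" using assms(2) by linarith
  then show ?thesis
  proof cases
    case 1
    then have "?g i = i" "?g (i + 1) = i + 1" using outside by auto
    then show ?thesis using desc 1 bounds by (auto simp: transp_apply split: if_splits)
  next
    case 2
    then have "transp a j (?g i) \<le> j" using outside bounds by (auto simp: transp_apply)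
    moreover have "?g (i + 1) > j" unfolding 2 by (rule chain_inv_pred_start[OF bounds(3)])
    ultimately show ?thesis using desc bounds by (auto simp: transp_apply split: if_splits)
  next
    case 3
    then show ?thesis by simp
  next
    case 4
    have "j - 1 \<le> ?g (j + 1)"
      using outside[of "j + 1"] chain_inv_range[OF tail, of "j + 1"] by (cases "j + 1 \<le> c") auto
    then have "a \<le> transp a j (?g (i + 1))" using 4 bounds by (auto simp: transp_apply)
    moreover have "transp a j (?g i) = a"
      using 4 chain_inv_pred_fixes[OF bounds(3)] by (simp add: transp_apply)
    ultimately show ?thesis using desc by auto
  qed
qed

lemma chain_inv_Cons_descent_gt:
  assumes "chain_seq a (j # r) c" "j < i"
    and descent: "chain_inv a (j # r) c i > chain_inv a (j # r) c (i + 1)"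
  shows "chain_inv (j - 1) r c i > chain_inv (j - 1) r c (i + 1)"
proof -
  have tail: "chain_seq (j - 1) r c" using assms(1) chain_seq_tail by blast
  have bounds: "a + 2 \<le> j" "chain_seq j r c" using assms(1) by auto
  let ?g = "chain_inv (j - 1) r c"
  have "?g x \<noteq> j \<and> ?g x \<noteq> a" if "j < x" for x
  proof -
    have "?g x \<noteq> j"
      using involutive_inj[OF chain_inv_involutive[OF tail], of x j]
        chain_inv_pred_fixes[OF bounds(2)] that by auto
    moreover have "j - 1 \<le> ?g x"
      using chain_inv_outside[OF tail, of x] chain_inv_range[OF tail, of x] that
      by (cases "x \<le> c") auto
    ultimately show ?thesis using bounds by auto
  qed
  then show ?thesis using descent assms(2) by (auto simp: transp_apply)
qed

lemma chain_inv_descent: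
  assumes "chain_seq a js c" "chain_inv a js c i > chain_inv a js c (i + 1)"
  shows "i = a \<and> c = a + 1 \<and> js = [] \<or> i = a \<and> chain_seq (a + 1) js c
    \<or> i + 1 = c \<and> chain_seq a js i \<or> (\<exists>js1 js2. js = js1 @ (i + 1) # js2)"
  using assms
proof (induction js arbitrary: a)
  case Nil
  then show ?case by (auto simp: transp_apply split: if_splits)
next
  case (Cons j r)
  show ?case
  proof (cases "i \<le> j")
    case True
    then show ?thesis
      using chain_inv_Cons_descent_le[OF Cons.prems(1) True Cons.prems(2)] Cons.prems(1)
      by (auto intro: exI[of _ "[]"])
  next
    case False
    then have "j < i" by simp
    have tail: "chain_seq (j - 1) r c" using Cons.prems(1) chain_seq_tail by blast
    from Cons.IH[OF tail chain_inv_Cons_descent_gt[OF Cons.prems(1) \<open>j < i\<close> Cons.prems(2)]]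
    show ?thesis
    proof (elim disjE conjE exE)
      assume "i + 1 = c" "chain_seq (j - 1) r i"
      then have "chain_seq j r i"
        using chain_seq_combine[of j r c "j - 1" i] Cons.prems(1) \<open>j < i\<close> by auto
      then show ?thesis using \<open>i + 1 = c\<close> Cons.prems(1) by auto
    next
      fix js1 js2
      assume "r = js1 @ (i + 1) # js2"
      then have "j # r = (j # js1) @ (i + 1) # js2" by simp
      then show ?thesis by blast
    qed (use \<open>j < i\<close> in auto)
  qed
qed

lemma rtimes_id: "rtimes id i = chain_inv i [] (i + 1)"
  by (simp add: rtimes_commuting s_def)

lemma rtimes_chain_inv_start:
  assumes "chain_seq (i + 1) js c"
  shows "\<not> chain_inv (i + 1) js c (i + 1) < chain_inv (i + 1) js c i"
    "rtimes (chain_inv (i + 1) js c) i = chain_inv i js c"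
proof -
  have "chain_inv (i + 1) js c i = i" "i + 1 < chain_inv (i + 1) js c (i + 1)"
    using chain_inv_outside[OF assms] chain_inv_start[OF assms] by auto
  then show "\<not> chain_inv (i + 1) js c (i + 1) < chain_inv (i + 1) js c i"
    "rtimes (chain_inv (i + 1) js c) i = chain_inv i js c"
    using rtimes_straddling[of "chain_inv (i + 1) js c" i] s_conj_chain_inv_start[OF assms] by auto
qed

lemma rtimes_chain_inv_end:
  assumes "chain_seq a js i"
  shows "\<not> chain_inv a js i (i + 1) < chain_inv a js i i"
    "rtimes (chain_inv a js i) i = chain_inv a js (i + 1)"
proof -
  have "chain_inv a js i i < i" "chain_inv a js i (i + 1) = i + 1"
    using chain_inv_end[OF assms] chain_inv_outside[OF assms] by auto
  then show "\<not> chain_inv a js i (i + 1) < chain_inv a js i i"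
    "rtimes (chain_inv a js i) i = chain_inv a js (i + 1)"
    using rtimes_straddling[of "chain_inv a js i" i] s_conj_chain_inv_end[OF assms] by auto
qed

lemma rtimes_chain_inv_join:
  assumes "chain_seq a js i" "chain_seq (i + 1) ks c"
  defines "z \<equiv> chain_inv a js i \<circ> chain_inv (i + 1) ks c"
  shows "\<not> z (i + 1) < z i" "rtimes z i = chain_inv a (js @ (i + 1) # ks) c"
proof -
  have "chain_inv (i + 1) ks c i = i" "i + 1 < chain_inv (i + 1) ks c (i + 1)"
    using chain_inv_outside[OF assms(2)] chain_inv_start[OF assms(2)] by auto
  then have "z i < i" "i + 1 < z (i + 1)"
    using chain_inv_end[OF assms(1)] chain_inv_outside[OF assms(1)] unfolding z_def by auto
  then show "\<not> z (i + 1) < z i" "rtimes z i = chain_inv a (js @ (i + 1) # ks) c"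
    using rtimes_straddling[of z i] s_conj_chain_inv_join[OF assms(1,2)] unfolding z_def by auto
qed

(* The degenerate interval a = c carries only the identity, so that a chain split at i may have
   an empty left or right part. *)
definition chain_on :: "int \<Rightarrow> int \<Rightarrow> (int \<Rightarrow> int) \<Rightarrow> bool" where
  "chain_on a c z \<longleftrightarrow> a = c \<and> z = id \<or> (\<exists>js. chain_seq a js c \<and> z = chain_inv a js c)"

lemma chain_on_chain_inv: "chain_seq a js c \<Longrightarrow> chain_on a c (chain_inv a js c)"
  unfolding chain_on_def by blast

lemma chain_on_le: "chain_on a c z \<Longrightarrow> a \<le> c"
  unfolding chain_on_def using chain_seq_less by fastforce

lemma chain_on_id_iff: "chain_on a c id \<longleftrightarrow> a = c"
  unfolding chain_on_def using chain_inv_start by fastforce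

lemma chain_on_succ_iff: "chain_on a (a + 1) z \<longleftrightarrow> z = s a"
proof -
  have "chain_seq a js (a + 1) \<longleftrightarrow> js = []" for js
    by (cases js) (auto dest: chain_seq_less)
  then show ?thesis by (auto simp: chain_on_def s_def)
qed

lemma chain_on_involutive: "chain_on a c z \<Longrightarrow> involutive z"
  unfolding chain_on_def using chain_inv_involutive involutive_id by blast

lemma chain_on_fixes_above: "chain_on a c z \<Longrightarrow> fixes_above c z"
  unfolding chain_on_def fixes_above_def using chain_inv_outside by auto

lemma chain_on_fixes_upto: "chain_on a c z \<Longrightarrow> fixes_upto (a - 1) z"
  unfolding chain_on_def fixes_upto_def using chain_inv_outside by auto

lemma chain_on_rtimes:
  assumes "chain_on a i z1" "chain_on (i + 1) c z2"
  shows "\<not> (z1 \<circ> z2) (i + 1) < (z1 \<circ> z2) i" "chain_on a c (rtimes (z1 \<circ> z2) i)"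
proof -
  have "\<not> (z1 \<circ> z2) (i + 1) < (z1 \<circ> z2) i \<and> chain_on a c (rtimes (z1 \<circ> z2) i)"
    using assms[unfolded chain_on_def]
  proof (elim disjE exE conjE)
    assume "a = i" "z1 = id" "i + 1 = c" "z2 = id"
    then show ?thesis using rtimes_id[of i] chain_on_succ_iff[of i] by (simp add: s_def)
  next
    fix ks assume "a = i" "z1 = id" "chain_seq (i + 1) ks c" "z2 = chain_inv (i + 1) ks c"
    then show ?thesis
      using rtimes_chain_inv_start[of i ks c] chain_seq_lower_start[of "i + 1" ks c i]
      by (auto intro: chain_on_chain_inv)
  next
    fix js assume "chain_seq a js i" "z1 = chain_inv a js i" "i + 1 = c" "z2 = id"
    then show ?thesis
      using rtimes_chain_inv_end[of a js i] chain_seq_raise_end[of a js i "i + 1"]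
      by (auto intro: chain_on_chain_inv)
  next
    fix js ks assume "chain_seq a js i" "z1 = chain_inv a js i"
      "chain_seq (i + 1) ks c" "z2 = chain_inv (i + 1) ks c"
    then show ?thesis
      using rtimes_chain_inv_join[of a js i ks c] chain_seq_append_Cons[of a js "i + 1" ks c]
      by (auto intro: chain_on_chain_inv)
  qed
  then show "\<not> (z1 \<circ> z2) (i + 1) < (z1 \<circ> z2) i" "chain_on a c (rtimes (z1 \<circ> z2) i)"
    by auto
qed

lemma chain_on_descent:
  assumes "chain_on a c z" "z (i + 1) < z i"
  obtains z1 z2 where "chain_on a i z1" "chain_on (i + 1) c z2" "z = rtimes (z1 \<circ> z2) i"
proof -
  obtain js where js: "chain_seq a js c" "z = chain_inv a js c"
    using assms unfolding chain_on_def by auto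
  have "\<exists>z1 z2. chain_on a i z1 \<and> chain_on (i + 1) c z2 \<and> chain_inv a js c = rtimes (z1 \<circ> z2) i"
    using chain_inv_descent[OF js(1) assms(2)[unfolded js(2)]]
  proof (elim disjE exE conjE)
    assume "i = a" "c = a + 1" "js = []"
    then show ?thesis using rtimes_id[of a] chain_on_id_iff by (intro exI[of _ id]) simp
  next
    assume "i = a" "chain_seq (a + 1) js c"
    then show ?thesis using rtimes_chain_inv_start(2)[of a js c]
      by (intro exI[of _ id] exI[of _ "chain_inv (a + 1) js c"]) (auto simp: chain_on_def)
  next
    assume "i + 1 = c" "chain_seq a js i"
    then show ?thesis using rtimes_chain_inv_end(2)[of a js i]
      by (intro exI[of _ "chain_inv a js i"] exI[of _ id]) (auto simp: chain_on_def)
  next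
    fix js1 js2 assume "js = js1 @ (i + 1) # js2"
    then have "chain_seq a js1 i" "chain_seq (i + 1) js2 c"
      using js(1) chain_seq_append_Cons by auto
    then show ?thesis using rtimes_chain_inv_join(2)[of a js1 i js2 c] \<open>js = _\<close>
      by (intro exI[of _ "chain_inv a js1 i"] exI[of _ "chain_inv (i + 1) js2 c"])
        (auto simp: chain_on_def)
  qed
  then show ?thesis using that js(2) by blast
qed

section \<open>Involution words of chain involutions\<close>

lemma chain_on_iw_run_imp_perm:
  assumes "chain_on a c z" "iw_run id w = Some z"
  shows "distinct w \<and> set w = {a..<c}"
  using assms
proof (induction "length w" arbitrary: w a c z rule: less_induct)
  case less
  show ?case
  proof (cases w rule: rev_cases)
    case Nil
    then show ?thesis using less.prems chain_on_id_iff by auto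
  next
    case (snoc p i)
    obtain y where run: "iw_run id p = Some y" and ascent: "\<not> y (i + 1) < y i"
      and z: "z = rtimes y i"
      using less.prems(2) unfolding snoc iw_run_snoc by (auto split: option.splits if_splits)
    have "z (i + 1) < z i"
      using rtimes_descent[OF involutive_iw_run[OF run involutive_id]] ascent z by simp
    then obtain z1 z2 where z1: "chain_on a i z1" and z2: "chain_on (i + 1) c z2"
      and "z = rtimes (z1 \<circ> z2) i"
      using chain_on_descent[OF less.prems(1)] by blast
    then have "y = z1 \<circ> z2" using z rtimes_inj by metis
    then have "i \<notin> set p" and run1: "iw_run id [j\<leftarrow>p. j < i] = Some z1"
      and run2: "iw_run id [j\<leftarrow>p. i < j] = Some z2"
      using run iw_run_id_comp_iff[of z1 z2 i p] chain_on_involutive[OF z1]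
        chain_on_involutive[OF z2] chain_on_fixes_above[OF z1] chain_on_fixes_upto[OF z2] by auto
    moreover have "length [j\<leftarrow>p. j < i] < length w" "length [j\<leftarrow>p. i < j] < length w"
      using snoc by (simp_all add: le_imp_less_Suc)
    ultimately have "distinct [j\<leftarrow>p. j < i] \<and> set [j\<leftarrow>p. j < i] = {a..<i}"
      "distinct [j\<leftarrow>p. i < j] \<and> set [j\<leftarrow>p. i < j] = {i + 1..<c}"
      using less.hyps z1 z2 run1 run2 by blast+
    then have "distinct p" "set p = {a..<i} \<union> {i + 1..<c}"
      using distinct_filter_split[OF \<open>i \<notin> set p\<close>] set_filter_split[OF \<open>i \<notin> set p\<close>]
      by metis+
    moreover have "{a..<c} = insert i ({a..<i} \<union> {i + 1..<c})"
      using chain_on_le[OF z1] chain_on_le[OF z2] by auto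
    ultimately show ?thesis
      using snoc \<open>i \<notin> set p\<close> by simp
  qed
qed

lemma perm_imp_chain_on_iw_run:
  assumes "a \<le> c" "distinct w" "set w = {a..<c}"
  shows "\<exists>z. chain_on a c z \<and> iw_run id w = Some z"
  using assms
proof (induction "length w" arbitrary: w a c rule: less_induct)
  case less
  show ?case
  proof (cases w rule: rev_cases)
    case Nil
    then show ?thesis using less.prems chain_on_id_iff by auto
  next
    case (snoc p i)
    have "i \<in> {a..<c}"
      using less.prems(3) snoc by (metis in_set_conv_decomp)
    moreover have "i \<notin> set p" "distinct p"
      using less.prems(2) snoc by auto
    ultimately have i: "i \<notin> set p" "a \<le> i" "i < c" and "distinct p"
      by auto
    have set_p: "set p = {a..<c} - {i}"
      using less.prems(3) snoc i by auto
    have "distinct [j\<leftarrow>p. j < i]" "distinct [j\<leftarrow>p. i < j]"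
      using distinct_filter_split i \<open>distinct p\<close> by blast+
    moreover have "set [j\<leftarrow>p. j < i] = {a..<i}" "set [j\<leftarrow>p. i < j] = {i + 1..<c}"
      unfolding set_filter set_p using i(2,3) by auto
    moreover have "length [j\<leftarrow>p. j < i] < length w" "length [j\<leftarrow>p. i < j] < length w"
      using snoc by (simp_all add: le_imp_less_Suc)
    ultimately obtain z1 z2 where z1: "chain_on a i z1" "iw_run id [j\<leftarrow>p. j < i] = Some z1"
      and z2: "chain_on (i + 1) c z2" "iw_run id [j\<leftarrow>p. i < j] = Some z2"
      using less.hyps i by (metis order.refl zless_imp_add1_zle)
    then have "iw_run id p = Some (z1 \<circ> z2)"
      using iw_run_id_comp_iff[of z1 z2 i p] i chain_on_involutive chain_on_fixes_above
        chain_on_fixes_upto[OF z2(1)] by auto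
    then show ?thesis
      using chain_on_rtimes[OF z1(1) z2(1)] unfolding snoc iw_run_snoc by auto
  qed
qed

theorem chain_on_words:
  assumes "a \<le> c"
  shows "(\<exists>z. chain_on a c z \<and> iw_run id w = Some z) \<longleftrightarrow> distinct w \<and> set w = {a..<c}"
  using assms chain_on_iw_run_imp_perm perm_imp_chain_on_iw_run by blast

lemma chain_perm_eq_chain_inv: "chain_perm js M = chain_inv 1 js M"
proof -
  have "foldr (\<lambda>(a, b) f. transp a b \<circ> f) (zip (a # map (\<lambda>i. i - 1) js) (js @ [c])) id
      = chain_inv a js c" for a c
    by (induction js arbitrary: a) auto
  then show ?thesis unfolding chain_perm_def .
qed

lemma sorted_wrt_iff_chain_seq:
  "sorted_wrt (<) (a # concat (map (\<lambda>i. [i - 1, i]) js) @ [c]) \<longleftrightarrow> chain_seq a js c"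
proof (induction js arbitrary: a)
  case (Cons j js)
  have "a # concat (map (\<lambda>i. [i - 1, i]) (j # js)) @ [c]
      = a # (j - 1) # j # concat (map (\<lambda>i. [i - 1, i]) js) @ [c]"
    by simp
  then have "sorted_wrt (<) (a # concat (map (\<lambda>i. [i - 1, i]) (j # js)) @ [c])
      \<longleftrightarrow> a < j - 1 \<and> sorted_wrt (<) (j # concat (map (\<lambda>i. [i - 1, i]) js) @ [c])"
    by (simp only: sorted_wrt2[OF transp_on_less]) simp
  then show ?case using Cons.IH by auto
qed simp

lemma Sigma_set_eq_chain_on:
  assumes "1 \<le> M"
  shows "Sigma_set M = Collect (chain_on 1 M)"
proof -
  have "Sigma_set M = {transp 1 M} \<union> {chain_inv 1 js M | js. js \<noteq> [] \<and> chain_seq 1 js M}"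
    unfolding Sigma_set_def chain_perm_eq_chain_inv sorted_wrt_iff_chain_seq ..
  also have "\<dots> = Collect (chain_on 1 M)"
  proof (cases "M = 1")
    case True
    then show ?thesis by (auto simp: chain_on_def transp_self dest: chain_seq_less)
  next
    case False
    then have "chain_on 1 M (transp 1 M)"
      using assms chain_on_chain_inv[of 1 "[]" M] by simp
    moreover have "chain_on 1 M \<sigma> \<longleftrightarrow> (\<exists>js. chain_seq 1 js M \<and> \<sigma> = chain_inv 1 js M)" for \<sigma>
      using False by (simp add: chain_on_def)
    ultimately show ?thesis by (auto, metis chain_inv.simps(1))
  qed
  finally show ?thesis .
qed

lemma PermN_eq_Union_RO: "PermN n m = (\<Union>\<sigma> \<in> Sigma_set (int m + 1). RO n \<sigma>)"
proof -
  have "distinct w \<and> set w = {1..int m}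
      \<longleftrightarrow> (\<exists>\<sigma> \<in> Sigma_set (int m + 1). iw_run id w = Some \<sigma>)" for w
    using chain_on_words[of 1 "int m + 1" w] Sigma_set_eq_chain_on[of "int m + 1"]
    by (auto simp: atLeastLessThanPlusOne_atLeastAtMost_int)
  then show ?thesis
    unfolding PermN_def RO_def is_inv_word_def by blast
qed

lemma RO_disjoint: "\<sigma>1 \<noteq> \<sigma>2 \<Longrightarrow> RO n \<sigma>1 \<inter> RO n \<sigma>2 = {}"
  unfolding RO_def is_inv_word_def by auto

section \<open>The involution tau\<close>

lemma tau_Suc: "tau (Suc m) = tau m \<circ> s (2 * int m + 2)"
proof -
  have "foldr (\<lambda>k f. s (2 * k) \<circ> f) ks g = foldr (\<lambda>k f. s (2 * k) \<circ> f) ks id \<circ> g" for ks g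
    by (induction ks) (auto simp: comp_assoc)
  moreover have "[1..int (Suc m)] = [1..int m] @ [int m + 1]"
    using upto_rec2[of 1 "int m + 1"] by (simp add: add.commute)
  ultimately show ?thesis unfolding tau_def by (simp add: algebra_simps)
qed

lemma tau_apply:
  "tau m x = (if 2 \<le> x \<and> x \<le> 2 * int m + 1 then if even x then x + 1 else x - 1 else x)"
proof (induction m arbitrary: x)
  case 0
  then show ?case by (simp add: tau_def)
next
  case (Suc m)
  show ?case unfolding tau_Suc by (simp add: Suc s_apply) presburger
qed

lemma involutive_tau: "involutive (tau m)"
  unfolding involutive_def by (simp add: tau_apply) presburger

lemma fixes_above_tau: "fixes_above (2 * int m + 1) (tau m)"
  unfolding fixes_above_def by (simp add: tau_apply)

definition evens :: "nat \<Rightarrow> int set" where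
  "evens m = {x. even x \<and> 2 \<le> x \<and> x \<le> 2 * int m}"

lemma image_double_eq_evens: "(\<lambda>k. 2 * k) ` {1..int m} = evens m"
  unfolding evens_def by (auto elim!: evenE)

lemma finite_evens: "finite (evens m)"
  unfolding image_double_eq_evens[symmetric] by simp

lemma card_evens: "card (evens m) = m"
  unfolding image_double_eq_evens[symmetric] by (simp add: card_image inj_on_def)

lemma evens_Suc: "evens (Suc m) = insert (2 * int m + 2) (evens m)"
  unfolding evens_def by auto

lemma iw_run_id_eq_s_iff: "iw_run id w = Some (s a) \<longleftrightarrow> distinct w \<and> set w = {a}"
proof -
  have "{a..<a + 1} = {a}" by auto
  then show ?thesis using chain_on_words[of a "a + 1" w] unfolding chain_on_succ_iff by simp
qed

(* Split tau (m + 1) = tau m \<circ> s (2m + 2) at the odd letter 2m + 1. *)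
lemma iw_run_id_eq_tau_iff: "iw_run id w = Some (tau m) \<longleftrightarrow> distinct w \<and> set w = evens m"
proof (induction m arbitrary: w)
  case 0
  have "tau 0 = id" "evens 0 = {}" by (auto simp: fun_eq_iff tau_apply evens_def)
  then have "iw_run id w = Some (tau 0) \<longleftrightarrow> w = []"
    using iw_run_id_eq_id by presburger
  then show ?case using \<open>evens 0 = {}\<close> by (metis distinct.simps(1) set_empty)
next
  case (Suc m)
  define i where "i = 2 * int m + 1"
  let ?lo = "[j\<leftarrow>w. j < i]" and ?hi = "[j\<leftarrow>w. i < j]"
  have "iw_run id w = Some (tau m \<circ> s (i + 1)) \<longleftrightarrow>
      i \<notin> set w \<and> iw_run id ?lo = Some (tau m) \<and> iw_run id ?hi = Some (s (i + 1))"
    using iw_run_id_comp_iff[of "tau m" "s (i + 1)" i w] involutive_tau fixes_above_tau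
    unfolding i_def by (simp add: involutive_def fixes_upto_def s_apply)
  also have "\<dots> \<longleftrightarrow> distinct w \<and> set w = evens (Suc m)"
  proof
    assume "i \<notin> set w \<and> iw_run id ?lo = Some (tau m) \<and> iw_run id ?hi = Some (s (i + 1))"
    then have i: "i \<notin> set w"
      and "distinct ?lo \<and> set ?lo = evens m" "distinct ?hi \<and> set ?hi = {i + 1}"
      using Suc.IH iw_run_id_eq_s_iff by blast+
    then have "distinct w" "set w = evens m \<union> {i + 1}"
      using distinct_filter_split[OF i] set_filter_split[OF i] by blast+
    then show "distinct w \<and> set w = evens (Suc m)"
      unfolding evens_Suc i_def by (simp add: add.assoc)
  next
    assume w: "distinct w \<and> set w = evens (Suc m)"
    then have "i \<notin> set w" unfolding i_def evens_def by auto
    moreover have "set ?lo = evens m" "set ?hi = {i + 1}"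
      unfolding set_filter w[THEN conjunct2] i_def evens_def by auto
    ultimately show "i \<notin> set w \<and> iw_run id ?lo = Some (tau m) \<and> iw_run id ?hi = Some (s (i + 1))"
      using Suc.IH iw_run_id_eq_s_iff distinct_filter_split w by blast
  qed
  finally show ?case
    unfolding tau_Suc i_def by (simp only: add.assoc one_add_one)
qed

section \<open>Fpf-involution words\<close>

(* For a set S of even integers, swaps S is the product of the commuting s j, j \<in> S. *)
definition swaps :: "int set \<Rightarrow> int \<Rightarrow> int" where
  "swaps S x = (if x \<in> S then x + 1 else if x - 1 \<in> S then x - 1 else x)"

lemma swaps_insert:
  assumes "j \<notin> S" "even j" "\<forall>y \<in> S. even y"
  shows "s j \<circ> swaps S = swaps (insert j S)" "swaps S \<circ> s j = swaps (insert j S)"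
proof -
  have odd_neighbours: "j - 1 \<notin> S" "j + 1 \<notin> S"
    using assms(2,3) by (metis even_add even_diff odd_one)+
  have not_both: "x \<notin> S" if "x - 1 \<in> S" for x
  proof
    assume "x \<in> S"
    then have "even x" "even (x - 1)" using that assms(3) by blast+
    then show False by presburger
  qed
  have "s j (swaps S x) = swaps (insert j S) x" "swaps S (s j x) = swaps (insert j S) x" for x
    using assms(1) odd_neighbours not_both[of x] not_both[of "x + 1"]
    unfolding swaps_def by (auto simp: s_apply add.commute)
  then show "s j \<circ> swaps S = swaps (insert j S)" "swaps S \<circ> s j = swaps (insert j S)"
    by (simp_all add: fun_eq_iff)
qed

lemma swaps_evens: "swaps (evens m) = tau m"
proof
  fix x
  show "swaps (evens m) x = tau m x"
  proof (cases "even x")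
    case True
    then have "x \<in> evens m \<longleftrightarrow> 2 \<le> x \<and> x \<le> 2 * int m + 1" "x - 1 \<notin> evens m"
      unfolding evens_def mem_Collect_eq by presburger+
    then show ?thesis using True by (simp add: swaps_def tau_apply)
  next
    case False
    then have "x \<notin> evens m" "x - 1 \<in> evens m \<longleftrightarrow> 2 \<le> x \<and> x \<le> 2 * int m + 1"
      unfolding evens_def mem_Collect_eq by presburger+
    then show ?thesis using False by (simp add: swaps_def tau_apply)
  qed
qed

lemma fpf_act_snoc: "fpf_act (b @ [i]) = s i \<circ> fpf_act b \<circ> s i"
  unfolding fpf_act_def by simp

lemma fpf_act_distinct_even:
  assumes "distinct b" "\<forall>j \<in> set b. even j"
  shows "fpf_act b = swaps (set b) \<circ> one_fpf \<circ> swaps (set b)"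
  using assms
proof (induction b rule: rev_induct)
  case Nil
  then show ?case by (simp add: fpf_act_def swaps_def fun_eq_iff)
next
  case (snoc i b)
  then have left: "s i \<circ> swaps (set b) = swaps (set (b @ [i]))"
    and right: "swaps (set b) \<circ> s i = swaps (set (b @ [i]))"
    using swaps_insert[of i "set b"] by auto
  have "fpf_act b = swaps (set b) \<circ> one_fpf \<circ> swaps (set b)"
    using snoc.prems by (intro snoc.IH) auto
  then have "fpf_act (b @ [i]) = (s i \<circ> swaps (set b)) \<circ> one_fpf \<circ> (swaps (set b) \<circ> s i)"
    unfolding fpf_act_snoc by (simp only: comp_assoc)
  then show ?case unfolding left right .
qed

(* As j is even, one_fpf and every s i with i \<noteq> j map the half-line x \<le> j into itself. *)
lemma fpf_act_le:
  assumes "even j" "j \<notin> set b" "x \<le> j"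
  shows "fpf_act b x \<le> j"
  using assms
proof (induction b arbitrary: x rule: rev_induct)
  case Nil
  then show ?case by (auto simp: fpf_act_def one_fpf_def; presburger)
next
  case (snoc i b)
  then have "i \<noteq> j" "s i x \<le> j" by (auto simp: s_apply)
  then have "fpf_act b (s i x) \<le> j" using snoc by simp
  then show ?case unfolding fpf_act_snoc using \<open>i \<noteq> j\<close> by (auto simp: s_apply)
qed

lemma fpf_act_arrangement_evens:
  "distinct b \<Longrightarrow> set b = evens m \<Longrightarrow> fpf_act b = tau m \<circ> one_fpf \<circ> tau m"
  using fpf_act_distinct_even swaps_evens by (simp add: evens_def)

lemma evens_subset_fpf_letters:
  assumes "fpf_act b = tau m \<circ> one_fpf \<circ> tau m"
  shows "evens m \<subseteq> set b"
proof
  fix j assume j: "j \<in> evens m"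
  have "j < (tau m \<circ> one_fpf \<circ> tau m) j"
    using j by (auto simp: evens_def tau_apply one_fpf_def; presburger)
  then show "j \<in> set b"
    using fpf_act_le[of j b j] assms j by (force simp: evens_def)
qed

lemma is_fpf_word_tau_iff:
  "is_fpf_word (tau m \<circ> one_fpf \<circ> tau m) b \<longleftrightarrow> distinct b \<and> set b = evens m"
proof
  assume word: "is_fpf_word (tau m \<circ> one_fpf \<circ> tau m) b"
  let ?e = "sorted_list_of_set (evens m)"
  have "distinct ?e" "set ?e = evens m" "length ?e = m"
    using finite_evens card_evens by auto
  then have "length b \<le> m"
    using word fpf_act_arrangement_evens unfolding is_fpf_word_def by metis
  moreover have sub: "evens m \<subseteq> set b"
    using word evens_subset_fpf_letters unfolding is_fpf_word_def by blast
  then have "m \<le> card (set b)"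
    using card_mono[OF finite_set] card_evens by metis
  ultimately have "card (set b) = length b" "card (set b) \<le> card (evens m)"
    using card_length[of b] card_evens by simp_all
  then show "distinct b \<and> set b = evens m"
    using card_distinct card_seteq[OF finite_set sub] by auto
next
  assume b: "distinct b \<and> set b = evens m"
  have "length b \<le> length b'" if "fpf_act b' = tau m \<circ> one_fpf \<circ> tau m" for b'
    using evens_subset_fpf_letters[OF that] b card_mono[OF finite_set] distinct_card card_length
    by (metis le_trans)
  then show "is_fpf_word (tau m \<circ> one_fpf \<circ> tau m) b"
    using fpf_act_arrangement_evens b unfolding is_fpf_word_def by blast
qed

section \<open>The involution pi and the queer operators\<close>

lemma involutive_fpf_invols: "p \<in> fpf_invols \<Longrightarrow> involutive p"
proof -
  assume "p \<in> fpf_invols"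
  then obtain w where "bij w" "p = w \<circ> one_fpf \<circ> inv w"
    unfolding fpf_invols_def fin_perm_def by auto
  moreover have "one_fpf (one_fpf y) = y" for y
    by (simp add: one_fpf_def)
  moreover have "inv w (w y) = y" "w (inv w y) = y" for y
    using \<open>bij w\<close> by (simp_all add: bij_is_inj bij_is_surj surj_f_inv_f)
  ultimately show "involutive p"
    unfolding involutive_def by simp
qed

(* For m = 0 the conditions force pi 1 = 3 and pi 3 = 4, so no involution satisfies them. *)
lemma not_pi_cond_one: "involutive p \<Longrightarrow> \<not> pi_cond 1 p"
proof
  assume "involutive p" "pi_cond 1 p"
  then have "p 1 = 3" "p 3 = one_fpf 3"
    unfolding pi_cond_def by auto
  then have "p (p 1) \<noteq> 1"
    by (simp add: one_fpf_def)
  then show False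
    using \<open>involutive p\<close> unfolding involutive_def by simp
qed

lemma pi_cond_imp_eq_tau_conj:
  assumes "pi_cond (int m + 1) p" "1 \<le> m"
  shows "p = tau m \<circ> one_fpf \<circ> tau m"
proof
  fix x
  let ?M = "int m + 1"
  have P: "\<forall>i. i \<notin> {1..2 * ?M} \<longrightarrow> p i = one_fpf i"
    "\<forall>i \<in> {1..2 * ?M}. i \<in> {1, 2 * ?M - 2} \<longrightarrow> p i = i + 2"
    "\<forall>i \<in> {1..2 * ?M}. i \<in> {3, 2 * ?M} \<longrightarrow> p i = i - 2"
    "\<forall>i. even i \<and> 1 < i \<and> i < 2 * ?M - 2 \<longrightarrow> p i = i + 3"
    "\<forall>i. odd i \<and> 3 < i \<and> i < 2 * ?M \<longrightarrow> p i = i - 3"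
    using assms(1) unfolding pi_cond_def by blast+
  have m: "1 \<le> int m" using assms(2) by simp
  have "(x < 1 \<or> 2 * ?M < x) \<or> (x = 1 \<or> x = 2 * ?M - 2) \<or> (x = 3 \<or> x = 2 * ?M)
    \<or> (even x \<and> 1 < x \<and> x < 2 * ?M - 2) \<or> (odd x \<and> 3 < x \<and> x < 2 * ?M)"
    by presburger
  then consider "x < 1 \<or> 2 * ?M < x" | "x = 1 \<or> x = 2 * ?M - 2" | "x = 3 \<or> x = 2 * ?M"
    | "even x \<and> 1 < x \<and> x < 2 * ?M - 2" | "odd x \<and> 3 < x \<and> x < 2 * ?M"
    by blast
  then show "p x = (tau m \<circ> one_fpf \<circ> tau m) x"
  proof cases
    case 1
    then have "p x = one_fpf x" using P(1) by auto
    then show ?thesis using 1 by (simp add: tau_apply one_fpf_def; presburger)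
  next
    case 2
    then have "p x = x + 2" using P(2) m by auto
    then show ?thesis using 2 m by (auto simp: tau_apply one_fpf_def)
  next
    case 3
    then have "p x = x - 2" using P(3) m by auto
    then show ?thesis using 3 m by (auto simp: tau_apply one_fpf_def)
  next
    case 4
    then have "p x = x + 3" using P(4) by auto
    then show ?thesis using 4 m by (simp add: tau_apply one_fpf_def; presburger)
  next
    case 5
    then have "p x = x - 3" using P(5) by auto
    then show ?thesis using 5 m by (simp add: tau_apply one_fpf_def; presburger)
  qed
qed

lemma RO_tau_eq_EvenN: "RO n (tau m) = EvenN n m"
  unfolding RO_def EvenN_def is_inv_word_def image_double_eq_evens iw_run_id_eq_tau_iff by simp

lemma RO_tau_eq_RSp: "RO n (tau m) = RSp n (tau m \<circ> one_fpf \<circ> tau m)"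
  unfolding RO_def RSp_def is_inv_word_def is_fpf_word_tau_iff iw_run_id_eq_tau_iff ..

lemma fbar1_Sp_eq_fbar1_O:
  assumes "\<forall>x \<in> set (ws ! 0). even x" "sorted_wrt (<) (ws ! 1)"
  shows "fbar1_Sp ws = fbar1_O ws"
proof (cases "ws ! 0")
  case Nil
  then show ?thesis unfolding fbar1_O_def fbar1_Sp_def Let_def by simp
next
  case (Cons x r)
  then have "x + 1 \<notin> set (ws ! 0)" using assms(1) by auto
  moreover have "(\<forall>y \<in> set (ws ! 1). x < y) \<longleftrightarrow> \<not> (ws ! 1 \<noteq> [] \<and> hd (ws ! 1) \<le> x)"
    using assms(2) by (cases "ws ! 1") auto
  ultimately show ?thesis unfolding fbar1_O_def fbar1_Sp_def Let_def using Cons by auto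
qed

lemma ebar1_Sp_eq_ebar1_O:
  assumes "\<forall>x \<in> set (ws ! 1). even x" "sorted_wrt (<) (ws ! 0)"
  shows "ebar1_Sp ws = ebar1_O ws"
proof (cases "ws ! 1")
  case Nil
  then show ?thesis unfolding ebar1_O_def ebar1_Sp_def Let_def by simp
next
  case (Cons y r)
  then have "even y" using assms(1) by auto
  moreover have "(\<forall>z \<in> set (ws ! 0). y < z) \<longleftrightarrow> \<not> (ws ! 0 \<noteq> [] \<and> hd (ws ! 0) \<le> y)"
    using assms(2) by (cases "ws ! 0") auto
  moreover have "(\<forall>z \<in> set (ws ! 0). y < z) \<Longrightarrow> insort y (ws ! 0) = y # ws ! 0"
    by (cases "ws ! 0") auto
  ultimately show ?thesis unfolding ebar1_O_def ebar1_Sp_def Let_def using Cons by auto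
qed

lemma queer_operators_agree_on_EvenN:
  assumes "2 \<le> n" "ws \<in> EvenN n m"
  shows "fbar1_O ws = fbar1_Sp ws \<and> ebar1_O ws = ebar1_Sp ws"
proof -
  have "ws ! 0 \<in> set ws" "ws ! 1 \<in> set ws" "\<forall>w \<in> set ws. sorted_wrt (<) w"
    "\<forall>x \<in> set (concat ws). even x"
    using assms unfolding EvenN_def incr_fact_def by auto
  then show ?thesis
    using fbar1_Sp_eq_fbar1_O[of ws] ebar1_Sp_eq_ebar1_O[of ws] by auto
qed

theorem proposition5p1:
  fixes m n :: nat and \<pi> :: "int \<Rightarrow> int"
  assumes "n \<ge> 1"
    and "\<pi> \<in> fpf_invols" and "pi_cond (int m + 1) \<pi>"
  shows "PermN n m = (\<Union>\<sigma> \<in> Sigma_set (int m + 1). RO n \<sigma>)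
       \<and> (\<forall>\<sigma>1 \<in> Sigma_set (int m + 1). \<forall>\<sigma>2 \<in> Sigma_set (int m + 1).
            \<sigma>1 \<noteq> \<sigma>2 \<longrightarrow> RO n \<sigma>1 \<inter> RO n \<sigma>2 = {})
       \<and> EvenN n m = RO n (tau m)
       \<and> RO n (tau m) = RSp n \<pi>
       \<and> (n \<ge> 2 \<longrightarrow> (\<forall>ws \<in> RO n (tau m).
            fbar1_O ws = fbar1_Sp ws \<and> ebar1_O ws = ebar1_Sp ws))"
proof -
  have "m \<noteq> 0"
    using assms(3) not_pi_cond_one[OF involutive_fpf_invols[OF assms(2)]] by (cases m) auto
  then have "\<pi> = tau m \<circ> one_fpf \<circ> tau m"
    using pi_cond_imp_eq_tau_conj assms(3) by simp
  then show ?thesis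
    using PermN_eq_Union_RO RO_disjoint RO_tau_eq_EvenN RO_tau_eq_RSp
      queer_operators_agree_on_EvenN by auto
qed

end
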